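(* Let $G$ be a graph and $l\ge1$ an integer. If $G$ has three distinct closed non-backtracking walks, each of length $l$, each starting and ending at the same vertex $v$, then $\mathrm{Abl}(G)\le 4l$.
   Context: A graph is $G=(V_G,E_G,t_G,h_G)$ with vertex set, edge set and tail/head maps (loops and multiple edges allowed). Directed edges are pairs $(e,\pm)$, with $(e,+)$ going from $t(e)$ to $h(e)$ and $(e,-)$ its inverse. A walk of length $m\ge1$ is a sequence $(u_1,\dots,u_m)$ of directed edges with the head of $u_i$ equal to the tail of $u_{i+1}$; it is closed if its start and end vertices coincide and non-backtracking if $u_{i+1}$ is never the inverse of $u_i$. The abelian girth $\mathrm{Abl}(G)$ is the minimum $m\ge1$ such that there is a closed non-backtracking walk $(u_1,\dots,u_m)$ in which, for every edge $e$, $(e,+)$ appears the same number of times as $(e,-)$ ($\infty$ if none exists). *)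

theory Defs
  imports Main "HOL-Library.Extended_Nat"
begin

text \<open>A graph G = (V, E, t, h): vertex set, edge set, tail and head maps
 (loops and multiple edges allowed). A directed edge is a pair (e, b) where
 b = True stands for (e,+) and b = False for (e,-).\<close>

definition is_graph :: "'v set \<Rightarrow> 'e set \<Rightarrow> ('e \<Rightarrow> 'v) \<Rightarrow> ('e \<Rightarrow> 'v) \<Rightarrow> bool" where
  "is_graph V E t h \<longleftrightarrow> (\<forall>e\<in>E. t e \<in> V \<and> h e \<in> V)"

definition dtail :: "('e \<Rightarrow> 'v) \<Rightarrow> ('e \<Rightarrow> 'v) \<Rightarrow> 'e \<times> bool \<Rightarrow> 'v" where
  "dtail t h u = (if snd u then t (fst u) else h (fst u))"

definition dhead :: "('e \<Rightarrow> 'v) \<Rightarrow> ('e \<Rightarrow> 'v) \<Rightarrow> 'e \<times> bool \<Rightarrow> 'v" where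
  "dhead t h u = (if snd u then h (fst u) else t (fst u))"

definition dinv :: "'e \<times> bool \<Rightarrow> 'e \<times> bool" where
  "dinv u = (fst u, \<not> snd u)"

definition is_walk :: "'v set \<Rightarrow> 'e set \<Rightarrow> ('e \<Rightarrow> 'v) \<Rightarrow> ('e \<Rightarrow> 'v) \<Rightarrow> ('e \<times> bool) list \<Rightarrow> bool" where
  "is_walk V E t h w \<longleftrightarrow> w \<noteq> [] \<and> (\<forall>i<length w. fst (w ! i) \<in> E) \<and>
     (\<forall>i. Suc i < length w \<longrightarrow> dhead t h (w ! i) = dtail t h (w ! Suc i))"

definition walk_start :: "('e \<Rightarrow> 'v) \<Rightarrow> ('e \<Rightarrow> 'v) \<Rightarrow> ('e \<times> bool) list \<Rightarrow> 'v" where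
  "walk_start t h w = dtail t h (hd w)"

definition walk_end :: "('e \<Rightarrow> 'v) \<Rightarrow> ('e \<Rightarrow> 'v) \<Rightarrow> ('e \<times> bool) list \<Rightarrow> 'v" where
  "walk_end t h w = dhead t h (last w)"

definition is_closed_walk :: "'v set \<Rightarrow> 'e set \<Rightarrow> ('e \<Rightarrow> 'v) \<Rightarrow> ('e \<Rightarrow> 'v) \<Rightarrow> ('e \<times> bool) list \<Rightarrow> bool" where
  "is_closed_walk V E t h w \<longleftrightarrow> is_walk V E t h w \<and> walk_start t h w = walk_end t h w"

definition non_backtracking :: "('e \<times> bool) list \<Rightarrow> bool" where
  "non_backtracking w \<longleftrightarrow> (\<forall>i. Suc i < length w \<longrightarrow> w ! Suc i \<noteq> dinv (w ! i))"

definition abelian_balanced :: "('e \<times> bool) list \<Rightarrow> bool" where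
  "abelian_balanced w \<longleftrightarrow> (\<forall>e. count_list w (e, True) = count_list w (e, False))"

definition abelian_girth :: "'v set \<Rightarrow> 'e set \<Rightarrow> ('e \<Rightarrow> 'v) \<Rightarrow> ('e \<Rightarrow> 'v) \<Rightarrow> enat" where
  "abelian_girth V E t h = Inf {enat (length w) | w.
     is_closed_walk V E t h w \<and> non_backtracking w \<and> abelian_balanced w}"

end

theory Submission
  imports Defs
begin

text \<open>Among three distinct closed non-backtracking walks at v of length l, two of them, a and b,
  are not inverse to each other. Write a = a' s and b = b' s with s their longest common final
  segment. The walk a b' a'\<inverse> b\<inverse> is closed, traverses every edge equally often in
  both directions and has length at most 4 l; with b or b\<inverse> in the role of b it is
  non-backtracking, unless a or b turns back at v, i.e. ends with the inverse of its first edge.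
  Such an edge pair is peeled off, the other walk is rotated to the new base point, and one
  concludes by induction on the length.\<close>

lemma dinv_dinv [simp]: "dinv (dinv x) = x"
  by (simp add: dinv_def)

lemma dinv_eq_iff [simp]: "dinv x = dinv y \<longleftrightarrow> x = y"
  by (metis dinv_dinv)

lemma dinv_neq [simp]: "dinv x \<noteq> x" "x \<noteq> dinv x"
  by (cases x; simp add: dinv_def)+

lemma dtail_dinv [simp]: "dtail t h (dinv x) = dhead t h x"
  and dhead_dinv [simp]: "dhead t h (dinv x) = dtail t h x"
  and fst_dinv [simp]: "fst (dinv x) = fst x"
  by (simp_all add: dinv_def dtail_def dhead_def)

definition rev_walk :: "('e \<times> bool) list \<Rightarrow> ('e \<times> bool) list" where
  "rev_walk w = rev (map dinv w)"

lemma rev_walk_simps [simp]: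
  "rev_walk [] = []" "rev_walk (x # xs) = rev_walk xs @ [dinv x]" "rev_walk (rev_walk xs) = xs"
  "length (rev_walk xs) = length xs" "rev_walk xs = [] \<longleftrightarrow> xs = []"
  "set (rev_walk xs) = dinv ` set xs"
  by (auto simp: rev_walk_def rev_map o_def)

lemma rev_walk_append: "rev_walk (xs @ ys) = rev_walk ys @ rev_walk xs"
  by (simp add: rev_walk_def)

lemma rev_walk_eq_iff [simp]: "rev_walk xs = rev_walk ys \<longleftrightarrow> xs = ys"
  by (metis rev_walk_simps(3))

lemma hd_rev_walk: "xs \<noteq> [] \<Longrightarrow> hd (rev_walk xs) = dinv (last xs)"
  and last_rev_walk: "xs \<noteq> [] \<Longrightarrow> last (rev_walk xs) = dinv (hd xs)"
  by (simp_all add: rev_walk_def hd_rev last_rev hd_map last_map)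

lemma count_list_rev_walk: "count_list (rev_walk w) (e, b) = count_list w (e, \<not> b)"
proof -
  have "count_list (map dinv w) (dinv (e, \<not> b)) = count_list w (e, \<not> b)"
    by (rule count_list_map_conv) (simp add: inj_def)
  then show ?thesis
    by (simp add: rev_walk_def dinv_def)
qed

text \<open>For u = v no condition is imposed between the last and the first edge.\<close>
definition nb_walk ::
  "'e set \<Rightarrow> ('e \<Rightarrow> 'v) \<Rightarrow> ('e \<Rightarrow> 'v) \<Rightarrow> 'v \<Rightarrow> 'v \<Rightarrow> ('e \<times> bool) list \<Rightarrow> bool" where
  "nb_walk E t h u v w \<longleftrightarrow> w \<noteq> [] \<and> (\<forall>x\<in>set w. fst x \<in> E) \<and>
     successively (\<lambda>x y. dhead t h x = dtail t h y) w \<and> successively (\<lambda>x y. y \<noteq> dinv x) w \<and>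
     dtail t h (hd w) = u \<and> dhead t h (last w) = v"

definition cyclically_reduced :: "('e \<times> bool) list \<Rightarrow> bool" where
  "cyclically_reduced w \<longleftrightarrow> hd w \<noteq> dinv (last w)"

definition abelian_cycle :: "'e set \<Rightarrow> ('e \<Rightarrow> 'v) \<Rightarrow> ('e \<Rightarrow> 'v) \<Rightarrow> ('e \<times> bool) list \<Rightarrow> bool" where
  "abelian_cycle E t h w \<longleftrightarrow> (\<exists>u. nb_walk E t h u u w) \<and> abelian_balanced w"

lemma nb_walk_iff_closed_walk:
  "nb_walk E t h v v w \<longleftrightarrow> is_closed_walk V E t h w \<and> non_backtracking w \<and>
     walk_start t h w = v \<and> walk_end t h w = v"
  unfolding nb_walk_def is_closed_walk_def is_walk_def non_backtracking_def walk_start_def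
    walk_end_def successively_conv_nth
  by (auto simp: all_set_conv_all_nth)

lemma abelian_girth_le_length:
  "abelian_cycle E t h w \<Longrightarrow> abelian_girth V E t h \<le> enat (length w)"
  unfolding abelian_cycle_def abelian_girth_def nb_walk_iff_closed_walk[where V = V]
  by (intro Inf_lower) auto

lemma nb_walk_nonempty: "nb_walk E t h u v w \<Longrightarrow> w \<noteq> []"
  by (simp add: nb_walk_def)

lemma nb_walk_append:
  assumes "nb_walk E t h u v x" "nb_walk E t h v w y" "hd y \<noteq> dinv (last x)"
  shows "nb_walk E t h u w (x @ y)"
  using assms unfolding nb_walk_def by (auto simp: successively_append_iff)

lemma nb_walk_appendD:
  assumes "nb_walk E t h u w (x @ y)" "x \<noteq> []"
  shows "nb_walk E t h u (dhead t h (last x)) x"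
    and "y \<noteq> [] \<Longrightarrow> nb_walk E t h (dhead t h (last x)) w y"
    and "y \<noteq> [] \<Longrightarrow> hd y \<noteq> dinv (last x)"
  using assms unfolding nb_walk_def by (auto simp: successively_append_iff)

lemma successively_rev_walk:
  assumes "\<And>x y. P (dinv y) (dinv x) \<longleftrightarrow> P x y"
  shows "successively P (rev_walk w) \<longleftrightarrow> successively P w"
  unfolding rev_walk_def successively_rev successively_map using assms by simp

lemma nb_walk_rev_walk:
  assumes "nb_walk E t h u v w"
  shows "nb_walk E t h v u (rev_walk w)"
proof -
  have "successively (\<lambda>x y. dhead t h x = dtail t h y) (rev_walk w) \<longleftrightarrow>
      successively (\<lambda>x y. dhead t h x = dtail t h y) w"
    by (rule successively_rev_walk) auto
  moreover have "successively (\<lambda>x y. y \<noteq> dinv x) (rev_walk w) \<longleftrightarrow>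
      successively (\<lambda>x y. y \<noteq> dinv x) w"
    by (rule successively_rev_walk) auto
  ultimately show ?thesis
    using assms unfolding nb_walk_def by (auto simp: hd_rev_walk last_rev_walk)
qed

lemma nb_walk_rotate:
  assumes w: "nb_walk E t h u u (e # xs)" and "cyclically_reduced (e # xs)"
  shows "nb_walk E t h (dhead t h e) (dhead t h e) (xs @ [e])"
proof (cases "xs = []")
  case True
  then show ?thesis using w by (simp add: nb_walk_def)
next
  case False
  have "nb_walk E t h u (dhead t h e) [e]" "nb_walk E t h (dhead t h e) u xs"
    using nb_walk_appendD[of E t h u u "[e]" xs] w False by simp_all
  moreover have "e \<noteq> dinv (last xs)"
    using assms(2) False by (simp add: cyclically_reduced_def)
  ultimately show ?thesis
    by (simp add: nb_walk_append)
qed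

lemma nb_walk_unwrap:
  assumes w: "nb_walk E t h u u w" and "\<not> cyclically_reduced w"
  obtains w' where "w = hd w # w' @ [dinv (hd w)]"
    "nb_walk E t h (dhead t h (hd w)) (dhead t h (hd w)) w'" "hd w' \<noteq> dinv (hd w)" "last w' \<noteq> hd w"
proof -
  define e where "e = hd w"
  obtain ws where ws: "w = e # ws"
    using nb_walk_nonempty[OF w] by (cases w) (simp_all add: e_def)
  have "last w = dinv e"
    using assms(2) by (simp add: cyclically_reduced_def e_def)
  then have "ws \<noteq> []" "last ws = dinv e"
    using ws by (auto split: if_splits)
  define w' where "w' = butlast ws"
  have w': "w = e # w' @ [dinv e]"
    using ws append_butlast_last_id[of ws] \<open>ws \<noteq> []\<close> \<open>last ws = dinv e\<close>
    by (simp add: w'_def)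
  have "w' \<noteq> []"
    using w unfolding w' by (auto simp: nb_walk_def)
  have rest: "nb_walk E t h (dhead t h e) u (w' @ [dinv e])" "hd (w' @ [dinv e]) \<noteq> dinv e"
    using nb_walk_appendD(2,3)[of E t h u u "[e]" "w' @ [dinv e]"] w unfolding w' by simp_all
  then have "nb_walk E t h (dhead t h (last w')) u [dinv e]" "dinv e \<noteq> dinv (last w')"
    using nb_walk_appendD(2,3)[OF rest(1) \<open>w' \<noteq> []\<close>] by simp_all
  then have "dhead t h (last w') = dhead t h e"
    by (simp add: nb_walk_def)
  then have "nb_walk E t h (dhead t h e) (dhead t h e) w'"
    using nb_walk_appendD(1)[OF rest(1) \<open>w' \<noteq> []\<close>] by simp
  with w' rest(2) \<open>dinv e \<noteq> dinv (last w')\<close> \<open>w' \<noteq> []\<close> show ?thesis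
    by (intro that[of w']) simp_all
qed

text \<open>The commutator of x = x' s and y = y' s with the common final segment s cancelled.\<close>
lemma abelian_cycle_commutator:
  assumes x: "nb_walk E t h u u (x' @ s)" and y: "nb_walk E t h u u (y' @ s)"
    and "x' \<noteq> []" "y' \<noteq> []" "last x' \<noteq> last y'"
    and "hd y' \<noteq> dinv (last (x' @ s))" "hd x' \<noteq> dinv (last (y' @ s))"
  shows "abelian_cycle E t h (x' @ s @ y' @ rev_walk x' @ rev_walk (y' @ s))"
proof -
  define m where "m = dhead t h (last x')"
  have "m = dhead t h (last y')"
  proof (cases "s = []")
    case True
    then show ?thesis using x y by (simp add: m_def nb_walk_def)
  next
    case False
    then show ?thesis
      using nb_walk_appendD(2)[OF x] nb_walk_appendD(2)[OF y] assms(3,4)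
      by (simp add: m_def nb_walk_def)
  qed
  then have x': "nb_walk E t h u m x'" and y': "nb_walk E t h u m y'"
    using nb_walk_appendD(1)[OF x] nb_walk_appendD(1)[OF y] assms(3,4) by (simp_all add: m_def)
  have "nb_walk E t h u m (x' @ s @ y')"
    using nb_walk_append[OF x y'] assms(6) by simp
  then have "nb_walk E t h u u ((x' @ s @ y') @ rev_walk x')"
    by (rule nb_walk_append[OF _ nb_walk_rev_walk[OF x']]) (use assms(3-5) in \<open>simp add: hd_rev_walk\<close>)
  then have "nb_walk E t h u u ((x' @ s @ y' @ rev_walk x') @ rev_walk (y' @ s))"
    by (intro nb_walk_append[OF _ nb_walk_rev_walk[OF y]])
      (use assms(3,4,7) in \<open>simp_all add: hd_rev_walk last_rev_walk\<close>)
  moreover have "abelian_balanced (x' @ s @ y' @ rev_walk x' @ rev_walk (y' @ s))"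
    by (simp add: abelian_balanced_def count_list_rev_walk rev_walk_append)
  ultimately show ?thesis
    unfolding abelian_cycle_def by auto
qed

lemma common_suffix_split:
  assumes "length xs = length ys" "xs \<noteq> ys"
  obtains xs' ys' zs where "xs = xs' @ zs" "ys = ys' @ zs" "xs' \<noteq> []" "ys' \<noteq> []"
    "last xs' \<noteq> last ys'"
  using assms
proof (induction xs arbitrary: ys rule: rev_induct)
  case Nil
  then show ?case by simp
next
  case (snoc x xs)
  then obtain ys0 y where ys: "ys = ys0 @ [y]"
    by (cases ys rule: rev_exhaust) auto
  show ?case
  proof (cases "x = y")
    case True
    with snoc.prems ys have "length xs = length ys0" "xs \<noteq> ys0" by auto
    then show ?thesis
      by (rule snoc.IH[rotated 1]) (use snoc.prems(1) ys True in \<open>metis append_assoc\<close>)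
  next
    case False
    show ?thesis
      by (rule snoc.prems(1)[where xs'="xs @ [x]" and ys'=ys and zs="[]"]) (use ys False in simp_all)
  qed
qed

lemma abelian_cycle_of_compatible:
  assumes "nb_walk E t h u u x" "nb_walk E t h u u y" "hd y \<noteq> dinv (last x)" "last x \<noteq> last y"
  shows "\<exists>w. abelian_cycle E t h w \<and> length w \<le> 2 * length x + 2 * length y"
  using assms
proof (induction "length y" arbitrary: x y u rule: less_induct)
  case less
  note x = less.prems(1) and y = less.prems(2)
  have "x \<noteq> []" "y \<noteq> []"
    using x y by (simp_all add: nb_walk_nonempty)
  consider "hd x \<noteq> dinv (last y)" | "hd x = dinv (last y)" "hd x \<noteq> hd y"
    | "hd x = hd y" "\<not> cyclically_reduced y"
    by (metis cyclically_reduced_def)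
  then show ?case
  proof cases
    case 1
    then show ?thesis
      using abelian_cycle_commutator[of E t h u x "[]" y] x y less.prems(3,4) \<open>x \<noteq> []\<close> \<open>y \<noteq> []\<close>
      by (intro exI[of _ "x @ y @ rev_walk x @ rev_walk y"]) auto
  next
    case 2
    moreover have "last x \<noteq> dinv (hd y)"
      using less.prems(3) by (metis dinv_dinv)
    ultimately show ?thesis
      using abelian_cycle_commutator[of E t h u x "[]" "rev_walk y"] x nb_walk_rev_walk[OF y]
        less.prems(3,4) \<open>x \<noteq> []\<close> \<open>y \<noteq> []\<close>
      by (intro exI[of _ "x @ rev_walk y @ rev_walk x @ y"]) (auto simp: hd_rev_walk last_rev_walk)
  next
    case 3
    define e where "e = hd y"
    obtain y' where y': "y = e # y' @ [dinv e]" "nb_walk E t h (dhead t h e) (dhead t h e) y'"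
      "hd y' \<noteq> dinv e" "last y' \<noteq> e"
      using nb_walk_unwrap[OF y 3(2)] unfolding e_def by blast
    obtain xs where xs: "x = e # xs"
      using \<open>x \<noteq> []\<close> 3(1) by (cases x) (simp_all add: e_def)
    have "cyclically_reduced x"
      using less.prems(3) 3(1) by (auto simp: cyclically_reduced_def)
    then have "nb_walk E t h (dhead t h e) (dhead t h e) (xs @ [e])"
      using nb_walk_rotate[of E t h u e xs] x xs by simp
    moreover have "length y' < length y"
      using y'(1) by simp
    ultimately obtain w where "abelian_cycle E t h w" "length w \<le> 2 * length (xs @ [e]) + 2 * length y'"
      using less.hyps[OF _ _ y'(2)] y'(3,4) by fastforce
    then show ?thesis
      using xs y'(1) by (intro exI[of _ w]) simp
  qed
qed

lemma abelian_cycle_of_same_length: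
  assumes a: "nb_walk E t h u u a" and b: "nb_walk E t h u u b"
    and "length a = length b" "a \<noteq> b" "hd b \<noteq> dinv (last a)" "hd a \<noteq> dinv (last b)"
  shows "\<exists>w. abelian_cycle E t h w \<and> length w \<le> 4 * length a"
proof -
  obtain a' b' s where ab: "a = a' @ s" "b = b' @ s" "a' \<noteq> []" "b' \<noteq> []" "last a' \<noteq> last b'"
    using common_suffix_split[OF assms(3,4)] .
  then have "abelian_cycle E t h (a' @ s @ b' @ rev_walk a' @ rev_walk (b' @ s))"
    using abelian_cycle_commutator[of E t h u a' s b'] a b assms(5,6) by simp
  moreover have "length (a' @ s @ b' @ rev_walk a' @ rev_walk (b' @ s)) \<le> 4 * length a"
    using ab(1,2) assms(3) by simp
  ultimately show ?thesis
    by blast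
qed

lemma abelian_cycle_of_reduced_unreduced:
  assumes a: "nb_walk E t h u u a" and b: "nb_walk E t h u u b"
    and "cyclically_reduced a" "\<not> cyclically_reduced b" "hd b = hd a \<or> hd b = dinv (last a)"
  shows "\<exists>w. abelian_cycle E t h w \<and> length w \<le> 2 * length a + 2 * length b"
proof -
  have "a \<noteq> []"
    using a by (rule nb_walk_nonempty)
  have ra: "hd a \<noteq> dinv (last a)" "last a \<noteq> dinv (hd a)"
    using assms(3) by (metis cyclically_reduced_def dinv_dinv)+
  have rb: "last b = dinv (hd b)"
    using assms(4) by (metis cyclically_reduced_def dinv_dinv)
  from assms(5) show ?thesis
  proof
    assume "hd b = hd a"
    then show ?thesis
      using abelian_cycle_of_compatible[OF a b] ra rb by simp
  next
    assume "hd b = dinv (last a)"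
    then show ?thesis
      using abelian_cycle_of_compatible[OF nb_walk_rev_walk[OF a] b] ra rb \<open>a \<noteq> []\<close>
      by (simp add: hd_rev_walk last_rev_walk)
  qed
qed

lemma abelian_cycle_of_distinct:
  assumes "nb_walk E t h v v a" "nb_walk E t h v v b" "length a = length b"
    "a \<noteq> b" "a \<noteq> rev_walk b"
  shows "\<exists>w. abelian_cycle E t h w \<and> length w \<le> 4 * length a"
  using assms
proof (induction "length a" arbitrary: a b v rule: less_induct)
  case less
  note a = less.prems(1) and b = less.prems(2)
  have "b \<noteq> []"
    using b by (rule nb_walk_nonempty)
  txt \<open>If both walks are cyclically reduced, one of the first two cases applies.\<close>
  consider "hd b \<noteq> dinv (last a)" "hd a \<noteq> dinv (last b)"
    | "dinv (last b) \<noteq> dinv (last a)" "hd a \<noteq> hd b"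
    | "cyclically_reduced a" "\<not> cyclically_reduced b" "hd b = hd a \<or> hd b = dinv (last a)"
    | "cyclically_reduced b" "\<not> cyclically_reduced a" "hd a = hd b \<or> hd a = dinv (last b)"
    | "\<not> cyclically_reduced a" "\<not> cyclically_reduced b" "hd b = hd a"
    unfolding cyclically_reduced_def by metis
  then show ?case
  proof cases
    case 1
    then show ?thesis
      using abelian_cycle_of_same_length[OF a b] less.prems(3,4) by blast
  next
    case 2
    then show ?thesis
      using abelian_cycle_of_same_length[OF a nb_walk_rev_walk[OF b]] less.prems(3,5) \<open>b \<noteq> []\<close>
      by (simp add: hd_rev_walk last_rev_walk)
  next
    case 3
    then show ?thesis
      using abelian_cycle_of_reduced_unreduced[OF a b] less.prems(3) by simp
  next
    case 4
    then show ?thesis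
      using abelian_cycle_of_reduced_unreduced[OF b a] less.prems(3) by simp
  next
    case 5
    define e where "e = hd a"
    obtain a' where a': "a = e # a' @ [dinv e]" "nb_walk E t h (dhead t h e) (dhead t h e) a'"
      using nb_walk_unwrap[OF a 5(1)] unfolding e_def by blast
    obtain b' where b': "b = e # b' @ [dinv e]" "nb_walk E t h (dhead t h e) (dhead t h e) b'"
      using nb_walk_unwrap[OF b 5(2)] unfolding 5(3) e_def by blast
    have "length a' < length a" "length a' = length b'" "a' \<noteq> b'" "a' \<noteq> rev_walk b'"
      using less.prems(3-5) unfolding a'(1) b'(1) by (auto simp: rev_walk_append)
    then obtain w where "abelian_cycle E t h w" "length w \<le> 4 * length a'"
      using less.hyps[OF _ a'(2) b'(2)] by blast
    moreover have "4 * length a' \<le> 4 * length a"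
      using \<open>length a' < length a\<close> by simp
    ultimately show ?thesis
      by (meson le_trans)
  qed
qed

theorem lemma3p4:
  fixes V :: "'v set" and E :: "'e set" and t h :: "'e \<Rightarrow> 'v"
    and l :: nat and v :: 'v and w1 w2 w3 :: "('e \<times> bool) list"
  assumes "is_graph V E t h"
    and "l \<ge> 1"
    and "\<forall>w\<in>{w1, w2, w3}. is_closed_walk V E t h w \<and> non_backtracking w \<and>
            length w = l \<and> walk_start t h w = v \<and> walk_end t h w = v"
    and "w1 \<noteq> w2" and "w1 \<noteq> w3" and "w2 \<noteq> w3"
  shows "abelian_girth V E t h \<le> enat (4 * l)"
proof -
  have walks: "nb_walk E t h v v w1" "nb_walk E t h v v w2" "nb_walk E t h v v w3"
    and lengths: "length w1 = l" "length w2 = l" "length w3 = l"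
    using assms(3) by (auto simp: nb_walk_iff_closed_walk[where V = V])
  have "\<exists>w. abelian_cycle E t h w \<and> length w \<le> 4 * l"
  proof (cases "w1 = rev_walk w2")
    case True
    then have "w1 \<noteq> rev_walk w3"
      using assms(6) by auto
    then show ?thesis
      using abelian_cycle_of_distinct[OF walks(1,3)] lengths assms(5) by simp
  next
    case False
    then show ?thesis
      using abelian_cycle_of_distinct[OF walks(1,2)] lengths assms(4) by simp
  qed
  then show ?thesis
    using abelian_girth_le_length order_trans enat_ord_simps(1) by metis
qed

end
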